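(* Consider the system \[ \begin{aligned} \dot S_h(t)&=\beta_h-C_{vh}\frac{I_v(t)}{N_v(t)}S_h(t)-\mu_hS_h(t),\\ \dot I_h(t)&=C_{vh}\frac{I_v(t-\tau)}{N_v(t-\tau)}S_h(t-\tau)-\mu_hI_h(t),\\ \dot S_v(t)&=\beta_v-C_{hv}I_h(t)S_v(t)-\mu_vS_v(t),\\ \dot I_v(t)&=C_{hv}I_h(t)S_v(t)-\mu_vI_v(t), \end{aligned} \] with $N_v=S_v+I_v$, positive parameters $\beta_h,\beta_v,\mu_h,\mu_v,C_{vh},C_{hv}$ and $\tau\ge0$. Let $R_0=\sqrt{C_{vh}C_{hv}\beta_h/(\mu_h^2\mu_v)}$ and, when $R_0>1$, let $I_h^*$ be the $I_h$-component of the unique equilibrium with all components positive. If $R_0>1$ and $\theta\in(0,1)$, then for the solution through any initial function $\varphi\in D$ one has $\limsup_{t\to\infty}I_h(t)>\theta I_h^*$.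
   Context: $C_+=\{\varphi\in C([-\tau,0],\mathbb{R}_+^4):\varphi_3(\theta)+\varphi_4(\theta)>0\ \forall\theta\in[-\tau,0]\}$ with the sup-norm, and $D=\{\varphi\in C_+:\varphi_2(0)>0\}$. *)

theory Defs
  imports "HOL-Analysis.Analysis"
begin

text \<open>Components of a state vector x :: real^4 are (S_h, I_h, S_v, I_v) = (x$1, x$2, x$3, x$4).\<close>

definition C_plus :: "real \<Rightarrow> (real \<Rightarrow> real^4) set" where
  "C_plus \<tau> = {\<phi>. continuous_on {-\<tau>..0} \<phi> \<and>
      (\<forall>s\<in>{-\<tau>..0}. \<forall>i. \<phi> s $ i \<ge> 0) \<and>
      (\<forall>s\<in>{-\<tau>..0}. \<phi> s $ 3 + \<phi> s $ 4 > 0)}"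

definition D_set :: "real \<Rightarrow> (real \<Rightarrow> real^4) set" where
  "D_set \<tau> = {\<phi> \<in> C_plus \<tau>. \<phi> 0 $ 2 > 0}"

definition is_solution ::
  "real \<Rightarrow> real \<Rightarrow> real \<Rightarrow> real \<Rightarrow> real \<Rightarrow> real \<Rightarrow> real \<Rightarrow> (real \<Rightarrow> real^4) \<Rightarrow> (real \<Rightarrow> real^4) \<Rightarrow> bool"
  where
  "is_solution \<beta>h \<beta>v \<mu>h \<mu>v Cvh Chv \<tau> \<phi> x \<longleftrightarrow>
     (\<forall>s\<in>{-\<tau>..0}. x s = \<phi> s) \<and>
     continuous_on {-\<tau>..} x \<and>
     (\<forall>t\<ge>0.
        ((\<lambda>s. x s $ 1) has_real_derivative
            (\<beta>h - Cvh * (x t $ 4 / (x t $ 3 + x t $ 4)) * x t $ 1 - \<mu>h * x t $ 1)) (at t within {0..}) \<and>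
        ((\<lambda>s. x s $ 2) has_real_derivative
            (Cvh * (x (t - \<tau>) $ 4 / (x (t - \<tau>) $ 3 + x (t - \<tau>) $ 4)) * x (t - \<tau>) $ 1
              - \<mu>h * x t $ 2)) (at t within {0..}) \<and>
        ((\<lambda>s. x s $ 3) has_real_derivative
            (\<beta>v - Chv * x t $ 2 * x t $ 3 - \<mu>v * x t $ 3)) (at t within {0..}) \<and>
        ((\<lambda>s. x s $ 4) has_real_derivative
            (Chv * x t $ 2 * x t $ 3 - \<mu>v * x t $ 4)) (at t within {0..}))"

definition is_pos_equilibrium ::
  "real \<Rightarrow> real \<Rightarrow> real \<Rightarrow> real \<Rightarrow> real \<Rightarrow> real \<Rightarrow> real \<Rightarrow> real \<Rightarrow> real \<Rightarrow> real \<Rightarrow> bool" where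
  "is_pos_equilibrium \<beta>h \<beta>v \<mu>h \<mu>v Cvh Chv Sh Ih Sv Iv \<longleftrightarrow>
     Sh > 0 \<and> Ih > 0 \<and> Sv > 0 \<and> Iv > 0 \<and>
     \<beta>h - Cvh * (Iv / (Sv + Iv)) * Sh - \<mu>h * Sh = 0 \<and>
     Cvh * (Iv / (Sv + Iv)) * Sh - \<mu>h * Ih = 0 \<and>
     \<beta>v - Chv * Ih * Sv - \<mu>v * Sv = 0 \<and>
     Chv * Ih * Sv - \<mu>v * Iv = 0"

definition R0 :: "real \<Rightarrow> real \<Rightarrow> real \<Rightarrow> real \<Rightarrow> real \<Rightarrow> real" where
  "R0 \<beta>h \<mu>h \<mu>v Cvh Chv = sqrt (Cvh * Chv * \<beta>h / (\<mu>h^2 * \<mu>v))"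

end

(*
  Suppose I_h < a < I_h^* from some time on. Then N_v tends to beta_v / mu_v, the infected
  vector fraction p = I_v / N_v satisfies p' = C_hv I_h (1 - p) - p beta_v / N_v and so ends
  up below some q < 1, and S_h ends up above some s > 0. From then on (I_h, p) dominates the
  cooperative linear delay system
    I' = C_vh s p(t - tau) - mu_h I,    p' = C_hv (1 - q) I - (beta_v / N_v) p,
  which, because a < I_h^*, has a strict subsolution growing like exp(e t). A first-touch
  argument keeps (I_h, p) above it, so I_h is unbounded: a contradiction. The equilibrium
  enters only through mu_h (C_hv (C_vh + mu_h) I_h^* + mu_h mu_v) = C_vh C_hv beta_h.
*)

theory Submission
  imports Defs "HOL-Real_Asymp.Real_Asymp"
begin

lemma linear_ode_lower_bound:
  fixes y y' :: "real \<Rightarrow> real"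
  assumes B: "0 < B" and "T \<le> b" and cont: "continuous_on {T..b} y"
    and der: "\<And>t. T < t \<Longrightarrow> t < b \<Longrightarrow> (y has_real_derivative y' t) (at t)"
    and ineq: "\<And>t. T < t \<Longrightarrow> t < b \<Longrightarrow> A \<le> y' t + B * y t"
  shows "A / B + (y T - A / B) * exp (- B * (b - T)) \<le> y b"
proof -
  define z where "z u = (y u - A / B) * exp (B * u)" for u
  have "z T \<le> z b"
  proof (rule DERIV_nonneg_imp_increasing_open[OF \<open>T \<le> b\<close>])
    fix t assume t: "T < t" "t < b"
    have "(z has_real_derivative (y' t + B * y t - A) * exp (B * t)) (at t)"
      unfolding z_def using der[OF t] B
      by (auto intro!: derivative_eq_intros simp: field_simps)
    moreover have "0 \<le> (y' t + B * y t - A) * exp (B * t)"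
      using ineq[OF t] by simp
    ultimately show "\<exists>d. (z has_real_derivative d) (at t) \<and> 0 \<le> d" by blast
  qed (unfold z_def, intro continuous_intros cont)
  then have "(y T - A / B) * (exp (B * T) / exp (B * b)) \<le> y b - A / B"
    by (simp add: z_def field_simps)
  moreover have "exp (B * T) / exp (B * b) = exp (- B * (b - T))"
    by (simp add: exp_diff [symmetric] algebra_simps)
  ultimately show ?thesis by simp
qed

lemma linear_ode_preserves_sign:
  fixes y y' :: "real \<Rightarrow> real"
  assumes "0 < B" "T \<le> b" "continuous_on {T..b} y"
    and "\<And>t. T < t \<Longrightarrow> t < b \<Longrightarrow> (y has_real_derivative y' t) (at t)"
    and "\<And>t. T < t \<Longrightarrow> t < b \<Longrightarrow> 0 \<le> y' t + B * y t"
  shows "0 \<le> y T \<Longrightarrow> 0 \<le> y b" and "0 < y T \<Longrightarrow> 0 < y b"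
proof -
  have decay: "y T * exp (- B * (b - T)) \<le> y b"
    using linear_ode_lower_bound[of B T b y y' 0] assms by simp
  show "0 \<le> y b" if "0 \<le> y T"
    using decay mult_nonneg_nonneg[OF that exp_ge_zero[of "- B * (b - T)"]] by linarith
  show "0 < y b" if "0 < y T"
    using decay mult_pos_pos[OF that exp_gt_zero[of "- B * (b - T)"]] by linarith
qed

lemma linear_ode_eventually_ge:
  fixes y y' :: "real \<Rightarrow> real"
  assumes B: "0 < B" and cont: "continuous_on {T..} y"
    and der: "\<And>t. T < t \<Longrightarrow> (y has_real_derivative y' t) (at t)"
    and ineq: "eventually (\<lambda>t. A \<le> y' t + B * y t) at_top" and e: "0 < e"
  shows "eventually (\<lambda>t. A / B - e \<le> y t) at_top"
proof -
  obtain T1 where T1: "\<And>t. T1 \<le> t \<Longrightarrow> A \<le> y' t + B * y t"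
    using ineq by (auto simp: eventually_at_top_linorder)
  define T0 where "T0 = max T T1"
  have bound: "A / B + (y T0 - A / B) * exp (- B * (t - T0)) \<le> y t" if "T0 \<le> t" for t
    using that cont der T1
    by (intro linear_ode_lower_bound[OF B]) (auto simp: T0_def intro: continuous_on_subset)
  have "((\<lambda>t. (y T0 - A / B) * exp (- B * (t - T0))) \<longlongrightarrow> 0) at_top"
    using B by real_asymp
  then have "eventually (\<lambda>t. - e < (y T0 - A / B) * exp (- B * (t - T0))) at_top"
    using e by (intro order_tendstoD) auto
  with eventually_ge_at_top[of T0] show ?thesis
    by eventually_elim (use bound in fastforce)
qed

lemma linear_ode_eventually_le:
  fixes y y' :: "real \<Rightarrow> real"
  assumes "0 < B" "continuous_on {T..} y"
    and "\<And>t. T < t \<Longrightarrow> (y has_real_derivative y' t) (at t)"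
    and "eventually (\<lambda>t. y' t + B * y t \<le> A) at_top" "0 < e"
  shows "eventually (\<lambda>t. y t \<le> A / B + e) at_top"
proof -
  have "eventually (\<lambda>t. - A / B - e \<le> - y t) at_top"
    using assms
    by (intro linear_ode_eventually_ge[where y' = "\<lambda>t. - y' t"])
       (auto intro: continuous_intros derivative_intros elim: eventually_mono)
  then show ?thesis by eventually_elim simp
qed

lemma has_real_derivative_pos_imp_less_left:
  fixes y :: "real \<Rightarrow> real"
  assumes "(y has_real_derivative d) (at t)" "0 < d" "T < t"
  obtains s where "T < s" "s < t" "y s < y t"
proof -
  obtain \<delta> where "0 < \<delta>" and \<delta>: "\<And>h. 0 < h \<Longrightarrow> h < \<delta> \<Longrightarrow> y (t - h) < y t"
    using DERIV_pos_inc_left[OF assms(1,2)] by blast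
  define h where "h = min \<delta> (t - T) / 2"
  have "0 < h" "h < \<delta>" "h < t - T"
    using \<open>0 < \<delta>\<close> \<open>T < t\<close> by (auto simp: h_def)
  then show thesis
    using that[of "t - h"] \<delta> by auto
qed

lemma isCont_ge_from_left:
  fixes y :: "real \<Rightarrow> real"
  assumes "isCont y t" "T < t" "\<And>s. T < s \<Longrightarrow> s < t \<Longrightarrow> c < y s"
  shows "c \<le> y t"
proof (rule tendsto_lowerbound)
  show "(y \<longlongrightarrow> y t) (at_left t)"
    using assms(1) by (simp add: isCont_def filterlim_at_split)
  show "eventually (\<lambda>s. c \<le> y s) (at_left t)"
    using eventually_at_left_real[OF assms(2)] by eventually_elim (use assms(3) in force)
qed (simp add: trivial_limit_at_left_real)

lemma continuous_induction_pos:
  fixes y :: "real \<Rightarrow> real"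
  assumes cont: "continuous_on {T..} y" and start: "0 < y T"
    and step: "\<And>t. T < t \<Longrightarrow> (\<And>s. T \<le> s \<Longrightarrow> s < t \<Longrightarrow> 0 < y s) \<Longrightarrow> 0 < y t"
    and "T \<le> t"
  shows "0 < y t"
proof (rule ccontr)
  assume "\<not> 0 < y t"
  define E where "E = {T..} \<inter> y -` {..0}"
  have "t \<in> E" using \<open>\<not> 0 < y t\<close> \<open>T \<le> t\<close> by (auto simp: E_def)
  moreover have "closed E"
    unfolding E_def by (intro continuous_closed_preimage cont) auto
  moreover have bdd: "bdd_below E"
    by (auto simp: E_def intro: bdd_belowI[where m = T])
  ultimately have t1: "Inf E \<in> E"
    by (intro closed_contains_Inf) auto
  have "0 < y s" if "T \<le> s" "s < Inf E" for s
    using that cInf_lower[OF _ bdd, of s] by (force simp: E_def)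
  moreover have "T < Inf E"
    using t1 start by (cases "Inf E = T") (auto simp: E_def)
  ultimately have "0 < y (Inf E)" by (rule step[rotated])
  with t1 show False by (simp add: E_def)
qed

lemma delay_barrier:
  fixes u v u' v' :: "real \<Rightarrow> real"
  assumes "0 \<le> \<tau>"
    and window: "\<And>s. T - \<tau> \<le> s \<Longrightarrow> s \<le> T \<Longrightarrow> a < u s \<and> b < v s"
    and cont: "continuous_on {T..} u" "continuous_on {T..} v"
    and du: "\<And>t. T < t \<Longrightarrow> (u has_real_derivative u' t) (at t)"
    and dv: "\<And>t. T < t \<Longrightarrow> (v has_real_derivative v' t) (at t)"
    and u_rises: "\<And>t. T < t \<Longrightarrow> b \<le> v (t - \<tau>) \<Longrightarrow> u t = a \<Longrightarrow> 0 < u' t"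
    and v_rises: "\<And>t. T < t \<Longrightarrow> a \<le> u t \<Longrightarrow> v t = b \<Longrightarrow> 0 < v' t"
    and "T \<le> t"
  shows "a < u t \<and> b < v t"
proof -
  have "0 < min (u t - a) (v t - b)"
  proof (rule continuous_induction_pos[OF _ _ _ \<open>T \<le> t\<close>])
    show "continuous_on {T..} (\<lambda>s. min (u s - a) (v s - b))"
      by (intro continuous_intros cont)
    show "0 < min (u T - a) (v T - b)"
      using window[of T] \<open>0 \<le> \<tau>\<close> by simp
  next
    fix t1 assume "T < t1" and below: "\<And>s. T \<le> s \<Longrightarrow> s < t1 \<Longrightarrow> 0 < min (u s - a) (v s - b)"
    have before: "a < u s \<and> b < v s" if "T - \<tau> \<le> s" "s < t1" for s
      using window[of s] below[of s] that by (cases "s \<le> T") auto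
    have "a \<le> u t1"
      using before \<open>T < t1\<close> \<open>0 \<le> \<tau>\<close>
      by (intro isCont_ge_from_left[where T = T] DERIV_isCont[OF du]) auto
    have "b \<le> v t1"
      using before \<open>T < t1\<close> \<open>0 \<le> \<tau>\<close>
      by (intro isCont_ge_from_left[where T = T] DERIV_isCont[OF dv]) auto
    have "b \<le> v (t1 - \<tau>)"
      using \<open>b \<le> v t1\<close> before[of "t1 - \<tau>"] \<open>T < t1\<close> \<open>0 \<le> \<tau>\<close>
      by (cases "\<tau> = 0") auto
    have "u t1 \<noteq> a"
    proof
      assume "u t1 = a"
      then obtain s where "T < s" "s < t1" "u s < a"
        using u_rises[OF \<open>T < t1\<close> \<open>b \<le> v (t1 - \<tau>)\<close>] du[OF \<open>T < t1\<close>]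
        by (auto intro: has_real_derivative_pos_imp_less_left[OF _ _ \<open>T < t1\<close>])
      with before[of s] \<open>0 \<le> \<tau>\<close> show False by auto
    qed
    moreover have "v t1 \<noteq> b"
    proof
      assume "v t1 = b"
      then obtain s where "T < s" "s < t1" "v s < b"
        using v_rises[OF \<open>T < t1\<close> \<open>a \<le> u t1\<close>] dv[OF \<open>T < t1\<close>]
        by (auto intro: has_real_derivative_pos_imp_less_left[OF _ _ \<open>T < t1\<close>])
      with before[of s] \<open>0 \<le> \<tau>\<close> show False by auto
    qed
    ultimately show "0 < min (u t1 - a) (v t1 - b)"
      using \<open>a \<le> u t1\<close> \<open>b \<le> v t1\<close> by simp
  qed
  then show ?thesis by simp
qed

lemma nonneg_if_derivative_pos_at_zeros:
  fixes y y' :: "real \<Rightarrow> real"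
  assumes cont: "continuous_on {0..} y" and "0 \<le> y 0"
    and der: "\<And>t. 0 \<le> t \<Longrightarrow> (y has_real_derivative y' t) (at t within {0..})"
    and rises: "\<And>t. 0 \<le> t \<Longrightarrow> y t = 0 \<Longrightarrow> 0 < y' t"
    and "0 \<le> t"
  shows "0 \<le> y t"
proof (rule ccontr)
  assume "\<not> 0 \<le> y t"
  define S where "S = {0..t} \<inter> y -` {0..}"
  have "0 \<in> S" using \<open>0 \<le> y 0\<close> \<open>0 \<le> t\<close> by (auto simp: S_def)
  moreover have "closed S"
    unfolding S_def by (intro continuous_closed_preimage continuous_on_subset[OF cont]) auto
  moreover have bdd: "bdd_above S"
    by (auto simp: S_def intro: bdd_aboveI[where M = t])
  ultimately have t0: "Sup S \<in> S"
    by (intro closed_contains_Sup) auto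
  define t0 where "t0 = Sup S"
  have after: "y s < 0" if "t0 < s" "s \<le> t" for s
    using that t0 cSup_upper[OF _ bdd, of s] by (force simp: S_def t0_def)
  have "0 \<le> t0" "t0 < t" "0 \<le> y t0"
    using t0 \<open>\<not> 0 \<le> y t\<close> by (auto simp: S_def t0_def less_le)
  have "y t0 \<le> 0"
  proof (rule tendsto_upperbound)
    show "(y \<longlongrightarrow> y t0) (at_right t0)"
      using cont \<open>0 \<le> t0\<close> unfolding continuous_on_def
      by (auto intro: tendsto_within_subset)
    show "eventually (\<lambda>s. y s \<le> 0) (at_right t0)"
      using eventually_at_right_real[OF \<open>t0 < t\<close>]
      by eventually_elim (use after in force)
  qed (simp add: trivial_limit_at_right_real)
  then have "0 < y' t0"
    using rises \<open>0 \<le> t0\<close> \<open>0 \<le> y t0\<close> by simp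
  then obtain d where "0 < d"
    and d: "\<And>h. 0 < h \<Longrightarrow> t0 + h \<in> {0..} \<Longrightarrow> h < d \<Longrightarrow> y t0 < y (t0 + h)"
    using has_real_derivative_pos_inc_right[OF der[OF \<open>0 \<le> t0\<close>]] by blast
  define h where "h = min d (t - t0) / 2"
  have "0 < h" "h < d" "h < t - t0"
    using \<open>0 < d\<close> \<open>t0 < t\<close> by (auto simp: h_def)
  then show False
    using d[of h] after[of "t0 + h"] \<open>0 \<le> t0\<close> \<open>0 \<le> y t0\<close> \<open>y t0 \<le> 0\<close> by auto
qed

lemma compact_continuous_pos_lower_bound:
  fixes f :: "'a::topological_space \<Rightarrow> real"
  assumes "compact S" "continuous_on S f" "\<And>s. s \<in> S \<Longrightarrow> 0 < f s"
  obtains m where "0 < m" "\<And>s. s \<in> S \<Longrightarrow> m < f s"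
proof (cases "S = {}")
  case True
  then show ?thesis using that[of 1] by simp
next
  case False
  then obtain s0 where "s0 \<in> S" "\<And>s. s \<in> S \<Longrightarrow> f s0 \<le> f s"
    using continuous_attains_inf[OF assms(1) False assms(2)] by auto
  then show ?thesis
    using that[of "f s0 / 2"] assms(3)[of s0] by fastforce
qed

lemma obtain_ratio_between:
  fixes A B C D :: real
  assumes "0 < A" "0 < B" "0 < D" "A * D < B * C"
  obtains r where "0 < r" "A < B * r" "D * r < C"
proof -
  have "A / B < C / D"
    using assms by (simp add: divide_less_eq less_divide_eq mult_ac)
  then obtain r where r: "A / B < r" "r < C / D"
    using dense by blast
  have "0 < r"
    using r(1) divide_pos_pos[OF assms(1,2)] by linarith
  moreover have "A < B * r"
    using r(1) assms(2) by (simp add: pos_divide_less_eq mult.commute)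
  moreover have "D * r < C"
    using r(2) assms(3) by (simp add: pos_less_divide_eq mult.commute)
  ultimately show thesis
    by (rule that)
qed

lemma mult_exp_minus_cancel: "y * exp (- a) * exp a = (y :: real)"
  by (simp add: exp_minus field_simps)

lemma pos_equilibrium_identity:
  assumes "is_pos_equilibrium \<beta>h \<beta>v \<mu>h \<mu>v Cvh Chv Shs Ihs Svs Ivs"
  shows "\<mu>h * (Chv * (Cvh + \<mu>h) * Ihs + \<mu>h * \<mu>v) = Cvh * Chv * \<beta>h"
proof -
  have pos: "0 < Ihs" "0 < Svs + Ivs" "0 < Ivs"
    and Sh_eq: "\<mu>h * Shs = \<beta>h - \<mu>h * Ihs"
    and Ih_eq: "Cvh * Ivs * Shs = \<mu>h * Ihs * (Svs + Ivs)"
    and Iv_eq: "Chv * Ihs * Svs = \<mu>v * Ivs"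
    using assms by (auto simp: is_pos_equilibrium_def field_simps)
  have "Ihs * Ivs * (Cvh * Chv * Shs) = Chv * Ihs * (Cvh * Ivs * Shs)"
    by (simp add: algebra_simps)
  also have "\<dots> = Chv * Ihs * (\<mu>h * Ihs * (Svs + Ivs))"
    by (simp only: Ih_eq)
  also have "\<dots> = \<mu>h * Ihs * (Chv * Ihs * Svs) + \<mu>h * Ihs * (Chv * Ihs * Ivs)"
    by (simp add: algebra_simps)
  also have "\<dots> = Ihs * Ivs * (\<mu>h * (\<mu>v + Chv * Ihs))"
    unfolding Iv_eq by (simp add: algebra_simps)
  finally have "Cvh * Chv * Shs = \<mu>h * (\<mu>v + Chv * Ihs)"
    using pos by simp
  then have "Cvh * Chv * (\<mu>h * Shs) = \<mu>h * (\<mu>h * (\<mu>v + Chv * Ihs))"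
    by (metis mult.left_commute)
  then have "Cvh * Chv * (\<beta>h - \<mu>h * Ihs) = \<mu>h * (\<mu>h * (\<mu>v + Chv * Ihs))"
    by (simp only: Sh_eq)
  then show ?thesis
    by (simp add: algebra_simps)
qed

locale vector_host_model =
  fixes \<beta>h \<beta>v \<mu>h \<mu>v Cvh Chv \<tau> :: real
  assumes \<beta>h_pos: "0 < \<beta>h" and \<beta>v_pos: "0 < \<beta>v" and \<mu>h_pos: "0 < \<mu>h" and \<mu>v_pos: "0 < \<mu>v"
    and Cvh_pos: "0 < Cvh" and Chv_pos: "0 < Chv" and \<tau>_nonneg: "0 \<le> \<tau>"
begin

definition Nv_eq :: real where
  "Nv_eq = \<beta>v / \<mu>v"

text \<open>If I_h < a eventually, then p' \<le> C_hv a - (C_hv a + beta_v / N_v) p and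
  S_h' \<ge> beta_h - (C_vh p + mu_h) S_h; p_bound and Sh_bound are the resulting eventual bounds,
  each with slack e. A positive growth_margin a e makes (1, r) exp(e t) a subsolution of the
  comparison system for a suitable ratio r.\<close>

definition p_bound :: "real \<Rightarrow> real \<Rightarrow> real" where
  "p_bound a e = Chv * a / (Chv * a + \<beta>v / (Nv_eq + e)) + e"

definition Sh_bound :: "real \<Rightarrow> real \<Rightarrow> real" where
  "Sh_bound a e = \<beta>h / (Cvh * p_bound a e + \<mu>h) - e"

definition growth_margin :: "real \<Rightarrow> real \<Rightarrow> real" where
  "growth_margin a e = Cvh * Sh_bound a e * (Chv * (1 - p_bound a e))
     - (\<mu>h + e) * (\<beta>v / (Nv_eq - e) + e) * exp (e * \<tau>)"

lemma Nv_eq_pos: "0 < Nv_eq"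
  using \<beta>v_pos \<mu>v_pos by (simp add: Nv_eq_def)

lemma \<beta>v_div_Nv_eq: "\<beta>v / Nv_eq = \<mu>v"
  using \<beta>v_pos \<mu>v_pos by (simp add: Nv_eq_def)

lemma p_bound_nonneg: "0 \<le> a \<Longrightarrow> 0 \<le> e \<Longrightarrow> 0 \<le> p_bound a e"
  using Chv_pos \<beta>v_pos Nv_eq_pos by (simp add: p_bound_def)

lemma p_bound_0: "p_bound a 0 = Chv * a / (Chv * a + \<mu>v)"
  by (simp add: p_bound_def \<beta>v_div_Nv_eq)

lemma bounds_at_0:
  assumes "0 < a"
  defines "D \<equiv> Chv * (Cvh + \<mu>h) * a + \<mu>h * \<mu>v"
  shows "0 < D" "0 < Sh_bound a 0" "growth_margin a 0 = \<mu>v * (Cvh * Chv * \<beta>h / D - \<mu>h)"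
proof -
  define w where "w = Chv * a + \<mu>v"
  show "0 < D"
    using assms Chv_pos Cvh_pos \<mu>h_pos \<mu>v_pos by (simp add: add_pos_pos)
  have "0 < w"
    using assms Chv_pos \<mu>v_pos by (simp add: w_def add_pos_pos)
  have Sh0: "Sh_bound a 0 = \<beta>h * w / D"
    using \<open>0 < w\<close> \<open>0 < D\<close> by (simp add: Sh_bound_def p_bound_0 field_simps D_def w_def)
  then show "0 < Sh_bound a 0"
    using \<open>0 < w\<close> \<open>0 < D\<close> \<beta>h_pos by simp
  have "1 - p_bound a 0 = \<mu>v / w"
    using \<open>0 < w\<close> by (simp add: p_bound_0 field_simps w_def)
  then have "growth_margin a 0 = Cvh * (\<beta>h * w / D) * (Chv * (\<mu>v / w)) - \<mu>h * \<mu>v"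
    by (simp add: growth_margin_def Sh0 \<beta>v_div_Nv_eq)
  also have "\<dots> = \<mu>v * (Cvh * Chv * \<beta>h / D - \<mu>h)"
    using \<open>0 < w\<close> by (simp add: field_simps)
  finally show "growth_margin a 0 = \<mu>v * (Cvh * Chv * \<beta>h / D - \<mu>h)" .
qed

lemma bounds_continuous_at_0:
  assumes "0 < a"
  shows "isCont (Sh_bound a) 0" "isCont (growth_margin a) 0"
proof -
  have "0 < Chv * a + \<mu>v"
    using assms Chv_pos \<mu>v_pos by (simp add: add_pos_pos)
  then have "isCont (p_bound a) 0"
    unfolding p_bound_def by (intro continuous_intros) (use Nv_eq_pos in \<open>auto simp: \<beta>v_div_Nv_eq\<close>)
  moreover have "0 < Cvh * p_bound a 0 + \<mu>h"
    using assms Chv_pos Cvh_pos \<mu>h_pos \<mu>v_pos by (simp add: p_bound_0 add_nonneg_pos)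
  ultimately show "isCont (Sh_bound a) 0"
    unfolding Sh_bound_def by (intro continuous_intros) auto
  then show "isCont (growth_margin a) 0"
    using \<open>isCont (p_bound a) 0\<close> Nv_eq_pos unfolding growth_margin_def by (intro continuous_intros) auto
qed

lemma slack_exists:
  assumes "0 < a" and below: "\<mu>h * (Chv * (Cvh + \<mu>h) * a + \<mu>h * \<mu>v) < Cvh * Chv * \<beta>h"
  obtains e where "0 < e" "e < Nv_eq" "0 < Sh_bound a e" "0 < growth_margin a e"
proof -
  have "\<mu>h < Cvh * Chv * \<beta>h / (Chv * (Cvh + \<mu>h) * a + \<mu>h * \<mu>v)"
    using below bounds_at_0(1)[OF \<open>0 < a\<close>] by (simp add: field_simps)
  then have "0 < growth_margin a 0"
    using bounds_at_0(3)[OF \<open>0 < a\<close>] \<mu>v_pos by simp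
  have at_right: "(f \<longlongrightarrow> f 0) (at_right 0)" if "isCont f 0" for f :: "real \<Rightarrow> real"
    using that by (simp add: isCont_def filterlim_at_split)
  have "eventually (\<lambda>e. 0 < e \<and> e < Nv_eq \<and> 0 < Sh_bound a e \<and> 0 < growth_margin a e) (at_right 0)"
    using eventually_at_right_real[OF Nv_eq_pos]
      order_tendstoD(1)[OF at_right[OF bounds_continuous_at_0(1)[OF \<open>0 < a\<close>]] bounds_at_0(2)[OF \<open>0 < a\<close>]]
      order_tendstoD(1)[OF at_right[OF bounds_continuous_at_0(2)[OF \<open>0 < a\<close>]] \<open>0 < growth_margin a 0\<close>]
    by eventually_elim auto
  then show thesis
    using that eventually_happens'[OF trivial_limit_at_right_real] by blast
qed

end

locale vector_host_solution = vector_host_model +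
  fixes \<phi> x :: "real \<Rightarrow> real^4"
  assumes initial: "\<phi> \<in> D_set \<tau>"
    and solution: "is_solution \<beta>h \<beta>v \<mu>h \<mu>v Cvh Chv \<tau> \<phi> x"
begin

definition Sh :: "real \<Rightarrow> real" where "Sh t = x t $ 1"
definition Ih :: "real \<Rightarrow> real" where "Ih t = x t $ 2"
definition Sv :: "real \<Rightarrow> real" where "Sv t = x t $ 3"
definition Iv :: "real \<Rightarrow> real" where "Iv t = x t $ 4"
definition N :: "real \<Rightarrow> real" where "N t = Sv t + Iv t"
definition p :: "real \<Rightarrow> real" where "p t = Iv t / N t"

lemma initial_state:
  assumes "s \<in> {-\<tau>..0}"
  shows "0 \<le> Sh s" "0 \<le> Ih s" "0 \<le> Sv s" "0 \<le> Iv s" "0 < N s"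
  using initial solution assms
  by (auto simp: D_set_def C_plus_def is_solution_def Sh_def Ih_def Sv_def Iv_def N_def)

lemma Ih_0_pos: "0 < Ih 0"
  using initial solution \<tau>_nonneg by (auto simp: D_set_def is_solution_def Ih_def)

lemma state_continuous_from:
  assumes "-\<tau> \<le> T"
  shows "continuous_on {T..} Sh" "continuous_on {T..} Ih"
    "continuous_on {T..} Sv" "continuous_on {T..} Iv"
  using solution assms unfolding is_solution_def Sh_def[abs_def] Ih_def[abs_def] Sv_def[abs_def] Iv_def[abs_def]
  by (auto intro!: continuous_intros intro: continuous_on_subset)

lemma state_deriv_within:
  assumes "0 \<le> t"
  shows "(Sh has_real_derivative \<beta>h - Cvh * p t * Sh t - \<mu>h * Sh t) (at t within {0..})"
    and "(Ih has_real_derivative Cvh * p (t - \<tau>) * Sh (t - \<tau>) - \<mu>h * Ih t) (at t within {0..})"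
    and "(Sv has_real_derivative \<beta>v - Chv * Ih t * Sv t - \<mu>v * Sv t) (at t within {0..})"
    and "(Iv has_real_derivative Chv * Ih t * Sv t - \<mu>v * Iv t) (at t within {0..})"
  using solution assms unfolding Sh_def[abs_def] Ih_def[abs_def] Sv_def[abs_def] Iv_def[abs_def]
  by (auto simp: is_solution_def p_def N_def Sv_def Iv_def)

lemma state_deriv:
  assumes "0 < t"
  shows "(Sh has_real_derivative \<beta>h - Cvh * p t * Sh t - \<mu>h * Sh t) (at t)"
    and "(Ih has_real_derivative Cvh * p (t - \<tau>) * Sh (t - \<tau>) - \<mu>h * Ih t) (at t)"
    and "(Sv has_real_derivative \<beta>v - Chv * Ih t * Sv t - \<mu>v * Sv t) (at t)"
    and "(Iv has_real_derivative Chv * Ih t * Sv t - \<mu>v * Iv t) (at t)"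
proof -
  have "at t within {0..} = at t"
    using assms by (intro at_within_open_subset[of _ "{0<..}"]) auto
  then show "(Sh has_real_derivative \<beta>h - Cvh * p t * Sh t - \<mu>h * Sh t) (at t)"
    and "(Ih has_real_derivative Cvh * p (t - \<tau>) * Sh (t - \<tau>) - \<mu>h * Ih t) (at t)"
    and "(Sv has_real_derivative \<beta>v - Chv * Ih t * Sv t - \<mu>v * Sv t) (at t)"
    and "(Iv has_real_derivative Chv * Ih t * Sv t - \<mu>v * Iv t) (at t)"
    using state_deriv_within[of t] assms by auto
qed

lemma N_deriv: "0 < t \<Longrightarrow> (N has_real_derivative \<beta>v - \<mu>v * N t) (at t)"
  unfolding N_def
  by (rule derivative_eq_intros state_deriv | assumption | simp add: algebra_simps)+

lemma N_continuous_from: "-\<tau> \<le> T \<Longrightarrow> continuous_on {T..} N"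
  unfolding N_def using state_continuous_from by (intro continuous_intros) auto

lemma N_pos:
  assumes "-\<tau> \<le> t"
  shows "0 < N t"
proof (cases "0 \<le> t")
  case True
  show ?thesis
  proof (rule linear_ode_preserves_sign(2)[where y = N, OF \<mu>v_pos True])
    show "continuous_on {0..t} N"
      using N_continuous_from[of 0] \<tau>_nonneg by (auto intro: continuous_on_subset)
    show "0 < N 0"
      using initial_state[of 0] \<tau>_nonneg by simp
  qed (use N_deriv \<beta>v_pos in auto)
next
  case False
  then show ?thesis using initial_state assms by simp
qed

lemma Sh_nonneg:
  assumes "-\<tau> \<le> t"
  shows "0 \<le> Sh t"
proof (cases "0 \<le> t")
  case True
  show ?thesis
    by (rule nonneg_if_derivative_pos_at_zeros[OF _ _ state_deriv_within(1) _ True])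
       (use state_continuous_from[of 0] initial_state[of 0] \<tau>_nonneg \<beta>h_pos in auto)
qed (use initial_state assms in simp)

lemma Sv_nonneg:
  assumes "-\<tau> \<le> t"
  shows "0 \<le> Sv t"
proof (cases "0 \<le> t")
  case True
  show ?thesis
    by (rule nonneg_if_derivative_pos_at_zeros[OF _ _ state_deriv_within(3) _ True])
       (use state_continuous_from[of 0] initial_state[of 0] \<tau>_nonneg \<beta>v_pos in auto)
qed (use initial_state assms in simp)

lemma Iv_nonneg_while_Ih_nonneg:
  assumes "0 \<le> b" and Ih_nonneg: "\<And>s. 0 < s \<Longrightarrow> s < b \<Longrightarrow> 0 \<le> Ih s"
  shows "0 \<le> Iv b"
proof (rule linear_ode_preserves_sign(1)[where y = Iv, OF \<mu>v_pos \<open>0 \<le> b\<close>])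
  show "continuous_on {0..b} Iv"
    using state_continuous_from(4)[of 0] \<tau>_nonneg by (auto intro: continuous_on_subset)
  show "0 \<le> Chv * Ih s * Sv s - \<mu>v * Iv s + \<mu>v * Iv s" if "0 < s" "s < b" for s
    using Ih_nonneg[OF that] Sv_nonneg[of s] that Chv_pos \<tau>_nonneg by simp
  show "0 \<le> Iv 0"
    using initial_state[of 0] \<tau>_nonneg by simp
qed (use state_deriv(4) in auto)

lemma p_nonneg_if_Iv_nonneg:
  assumes "-\<tau> \<le> t" "0 \<le> Iv t"
  shows "0 \<le> p t"
  using N_pos[OF assms(1)] assms(2) by (simp add: p_def)

lemma Ih_pos:
  assumes "0 \<le> t"
  shows "0 < Ih t"
proof (rule continuous_induction_pos[where y = Ih and T = 0, OF _ Ih_0_pos _ assms])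
  show "continuous_on {0..} Ih"
    using state_continuous_from(2)[of 0] \<tau>_nonneg by simp
next
  fix t1 assume "0 < t1" and before: "\<And>s. 0 \<le> s \<Longrightarrow> s < t1 \<Longrightarrow> 0 < Ih s"
  have p_nonneg: "0 \<le> p s" if "-\<tau> \<le> s" "s < t1" for s
  proof (cases "0 \<le> s")
    case True
    then have "0 \<le> Iv s"
      using before that by (intro Iv_nonneg_while_Ih_nonneg) (auto intro: less_imp_le)
    then show ?thesis using p_nonneg_if_Iv_nonneg that by simp
  qed (use initial_state that p_nonneg_if_Iv_nonneg in auto)
  show "0 < Ih t1"
  proof (rule linear_ode_preserves_sign(2)[where y = Ih, OF \<mu>h_pos])
    show "continuous_on {0..t1} Ih"
      using state_continuous_from(2)[of 0] \<tau>_nonneg by (auto intro: continuous_on_subset)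
    show "0 \<le> Cvh * p (s - \<tau>) * Sh (s - \<tau>) - \<mu>h * Ih s + \<mu>h * Ih s" if "0 < s" "s < t1" for s
      using p_nonneg[of "s - \<tau>"] Sh_nonneg[of "s - \<tau>"] that Cvh_pos \<tau>_nonneg by simp
  qed (use state_deriv(2) \<open>0 < t1\<close> Ih_0_pos in auto)
qed

lemma Ih_nonneg: "-\<tau> \<le> t \<Longrightarrow> 0 \<le> Ih t"
  using Ih_pos initial_state by (cases "0 \<le> t") (auto intro: less_imp_le)

lemma Iv_nonneg: "-\<tau> \<le> t \<Longrightarrow> 0 \<le> Iv t"
  using Iv_nonneg_while_Ih_nonneg Ih_pos initial_state
  by (cases "0 \<le> t") (auto intro: less_imp_le)

lemma p_nonneg: "-\<tau> \<le> t \<Longrightarrow> 0 \<le> p t"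
  using p_nonneg_if_Iv_nonneg Iv_nonneg by simp

lemma p_le_1: "-\<tau> \<le> t \<Longrightarrow> p t \<le> 1"
  using N_pos Sv_nonneg by (simp add: p_def N_def)

lemma p_continuous_from: "-\<tau> \<le> T \<Longrightarrow> continuous_on {T..} p"
  unfolding p_def using state_continuous_from N_continuous_from N_pos
  by (intro continuous_intros) (auto simp: less_imp_neq[symmetric])

lemma p_deriv:
  assumes "0 < t"
  shows "(p has_real_derivative Chv * Ih t * (1 - p t) - p t * \<beta>v / N t) (at t)"
proof -
  have "N t \<noteq> 0" using N_pos[of t] assms \<tau>_nonneg by simp
  have "(p has_real_derivative
      ((Chv * Ih t * Sv t - \<mu>v * Iv t) * N t - Iv t * (\<beta>v - \<mu>v * N t)) / (N t * N t)) (at t)"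
    unfolding p_def[abs_def] by (rule DERIV_divide[OF state_deriv(4) N_deriv \<open>N t \<noteq> 0\<close>]) (use assms in auto)
  moreover have "((Chv * Ih t * Sv t - \<mu>v * Iv t) * N t - Iv t * (\<beta>v - \<mu>v * N t)) / (N t * N t)
      = Chv * Ih t * (1 - p t) - p t * \<beta>v / N t"
  proof -
    have Sv_eq: "Sv t = N t - Iv t" by (simp add: N_def)
    show ?thesis
      using \<open>N t \<noteq> 0\<close> unfolding Sv_eq by (simp add: p_def field_simps)
  qed
  ultimately show ?thesis by simp
qed

lemma N_eventually_near:
  assumes "0 < e"
  shows "eventually (\<lambda>t. Nv_eq - e \<le> N t \<and> N t \<le> Nv_eq + e) at_top"
proof -
  have cont: "continuous_on {0..} N"
    using N_continuous_from[of 0] \<tau>_nonneg by simp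
  have "eventually (\<lambda>t. \<beta>v / \<mu>v - e \<le> N t) at_top"
    by (rule linear_ode_eventually_ge[OF \<mu>v_pos cont N_deriv]) (use assms in auto)
  moreover have "eventually (\<lambda>t. N t \<le> \<beta>v / \<mu>v + e) at_top"
    by (rule linear_ode_eventually_le[OF \<mu>v_pos cont N_deriv]) (use assms in auto)
  ultimately show ?thesis
    by eventually_elim (simp add: Nv_eq_def)
qed

lemma p_eventually_le:
  assumes "0 < a" "0 < e" and below: "eventually (\<lambda>t. Ih t < a) at_top"
  shows "eventually (\<lambda>t. p t \<le> p_bound a e) at_top"
proof -
  define B where "B = Chv * a + \<beta>v / (Nv_eq + e)"
  have "0 < B"
    using assms Chv_pos \<beta>v_pos Nv_eq_pos by (simp add: B_def add_pos_pos)
  have "eventually (\<lambda>t. Chv * Ih t * (1 - p t) - p t * \<beta>v / N t + B * p t \<le> Chv * a) at_top"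
    using below N_eventually_near[OF \<open>0 < e\<close>] eventually_ge_at_top[of 0]
  proof eventually_elim
    case (elim t)
    then have "-\<tau> \<le> t" using \<tau>_nonneg by simp
    have "Chv * Ih t * (1 - p t) \<le> Chv * a * (1 - p t)"
      using elim p_le_1[OF \<open>-\<tau> \<le> t\<close>] Chv_pos by (intro mult_right_mono) auto
    moreover have "p t * (\<beta>v / (Nv_eq + e)) \<le> p t * (\<beta>v / N t)"
      using elim N_pos[OF \<open>-\<tau> \<le> t\<close>] p_nonneg[OF \<open>-\<tau> \<le> t\<close>] \<beta>v_pos
      by (intro mult_left_mono divide_left_mono) auto
    ultimately show ?case
      by (simp add: B_def algebra_simps)
  qed
  then have "eventually (\<lambda>t. p t \<le> Chv * a / B + e) at_top"
    using p_continuous_from[of 0] \<tau>_nonneg p_deriv \<open>0 < e\<close>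
    by (intro linear_ode_eventually_le[OF \<open>0 < B\<close>]) auto
  then show ?thesis
    by (simp add: p_bound_def B_def)
qed

lemma Sh_eventually_ge:
  assumes "0 \<le> q" "0 < e" and "eventually (\<lambda>t. p t \<le> q) at_top"
  shows "eventually (\<lambda>t. \<beta>h / (Cvh * q + \<mu>h) - e \<le> Sh t) at_top"
proof -
  have "0 < Cvh * q + \<mu>h"
    using assms Cvh_pos \<mu>h_pos by (simp add: add_nonneg_pos)
  have "eventually (\<lambda>t. \<beta>h \<le> \<beta>h - Cvh * p t * Sh t - \<mu>h * Sh t + (Cvh * q + \<mu>h) * Sh t) at_top"
    using assms(3) eventually_ge_at_top[of 0]
  proof eventually_elim
    case (elim t)
    then have "Cvh * p t * Sh t \<le> Cvh * q * Sh t"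
      using Sh_nonneg[of t] Cvh_pos \<tau>_nonneg by (intro mult_right_mono mult_left_mono) auto
    then show ?case by (simp add: algebra_simps)
  qed
  then show ?thesis
    using state_continuous_from(1)[of 0] \<tau>_nonneg state_deriv(1) \<open>0 < e\<close>
    by (intro linear_ode_eventually_ge[OF \<open>0 < Cvh * q + \<mu>h\<close>]) auto
qed

lemma Iv_eventually_pos: "eventually (\<lambda>t. 0 < Iv t) at_top"
proof -
  obtain t0 where "1 \<le> t0" "0 < Iv t0"
  proof (cases "0 < Iv 1")
    case True
    then show ?thesis using that[of 1] by simp
  next
    case False
    then have "Iv 1 = 0"
      using Iv_nonneg[of 1] \<tau>_nonneg by simp
    then have "0 < Sv 1"
      using N_pos[of 1] \<tau>_nonneg by (simp add: N_def)
    then have "0 < Chv * Ih 1 * Sv 1 - \<mu>v * Iv 1"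
      using Ih_pos[of 1] Chv_pos \<open>Iv 1 = 0\<close> by simp
    then obtain d where "0 < d" and d: "\<forall>h>0. h < d \<longrightarrow> Iv 1 < Iv (1 + h)"
      using DERIV_pos_inc_right[OF state_deriv(4)[of 1]] by auto
    then have "Iv 1 < Iv (1 + d / 2)"
      by simp
    then show ?thesis
      using that[of "1 + d / 2"] \<open>Iv 1 = 0\<close> \<open>0 < d\<close> by simp
  qed
  have "0 < Iv t" if "t0 \<le> t" for t
  proof (rule linear_ode_preserves_sign(2)[where y = Iv, OF \<mu>v_pos that _ _ _ \<open>0 < Iv t0\<close>])
    show "continuous_on {t0..t} Iv"
      using state_continuous_from(4)[of t0] \<open>1 \<le> t0\<close> \<tau>_nonneg by (auto intro: continuous_on_subset)
    show "0 \<le> Chv * Ih s * Sv s - \<mu>v * Iv s + \<mu>v * Iv s" if "t0 < s" for s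
      using Ih_nonneg[of s] Sv_nonneg[of s] that \<open>1 \<le> t0\<close> Chv_pos \<tau>_nonneg by simp
  qed (use state_deriv(4) \<open>1 \<le> t0\<close> in auto)
  then show ?thesis
    by (auto simp: eventually_at_top_linorder)
qed

lemma p_eventually_pos: "eventually (\<lambda>t. 0 < p t) at_top"
  using Iv_eventually_pos eventually_ge_at_top[of 0]
  by eventually_elim (use N_pos \<tau>_nonneg in \<open>simp add: p_def\<close>)

lemma Ih_deriv_exceeds_rate:
  assumes "0 \<le> cv" "0 \<le> sh" "-\<tau> \<le> t - \<tau>" "sh \<le> Sh (t - \<tau>)"
    and "cv * exp (\<epsilon> * (t - \<tau>)) \<le> p (t - \<tau>)" and "Ih t = cu * exp (\<epsilon> * t)"
    and Ih_rate: "(\<mu>h + \<epsilon>) * cu * exp (\<epsilon> * \<tau>) < Cvh * sh * cv"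
  shows "\<epsilon> * Ih t < Cvh * p (t - \<tau>) * Sh (t - \<tau>) - \<mu>h * Ih t"
proof -
  define E where "E = exp (\<epsilon> * (t - \<tau>))"
  have "0 < E" by (simp add: E_def)
  have "Ih t = cu * exp (\<epsilon> * \<tau>) * E"
    using assms(6) by (simp add: E_def mult.assoc algebra_simps flip: exp_add)
  moreover have "Cvh * (cv * E) * sh \<le> Cvh * p (t - \<tau>) * Sh (t - \<tau>)"
    using assms(1-5) p_nonneg[OF assms(3)] Cvh_pos \<open>0 < E\<close>
    by (intro mult_mono mult_left_mono) (auto simp: E_def)
  moreover have "(\<mu>h + \<epsilon>) * cu * exp (\<epsilon> * \<tau>) * E < Cvh * sh * cv * E"
    using Ih_rate \<open>0 < E\<close> by simp
  ultimately show ?thesis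
    by (simp add: algebra_simps)
qed

lemma p_deriv_exceeds_rate:
  assumes "-\<tau> \<le> t" "0 \<le> Chv * (1 - q)" "p t \<le> q" "\<beta>v / N t \<le> M"
    and "cu * exp (\<epsilon> * t) \<le> Ih t" and "p t = cv * exp (\<epsilon> * t)"
    and p_rate: "(M + \<epsilon>) * cv < Chv * (1 - q) * cu"
  shows "\<epsilon> * p t < Chv * Ih t * (1 - p t) - p t * \<beta>v / N t"
proof -
  define E where "E = exp (\<epsilon> * t)"
  have "0 < E" by (simp add: E_def)
  have "Chv * (1 - q) * (cu * E) \<le> Chv * (1 - q) * Ih t"
    using assms(2,5) by (intro mult_left_mono) (auto simp: E_def)
  also have "\<dots> = Chv * Ih t * (1 - q)"
    by (simp add: algebra_simps)
  also have "\<dots> \<le> Chv * Ih t * (1 - p t)"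
    using assms(3) Ih_nonneg[OF assms(1)] Chv_pos by (intro mult_left_mono) auto
  finally have "Chv * (1 - q) * cu * E \<le> Chv * Ih t * (1 - p t)"
    by (simp add: mult.assoc)
  moreover have "p t * \<beta>v / N t \<le> p t * M"
    using assms(4) p_nonneg[OF assms(1)] by (simp add: mult_left_mono flip: times_divide_eq_right)
  moreover have "(M + \<epsilon>) * cv * E < Chv * (1 - q) * cu * E"
    using p_rate \<open>0 < E\<close> by simp
  ultimately show ?thesis
    using assms(6) by (simp add: E_def algebra_simps)
qed

text \<open>The pair (cu, cv) exp(\<epsilon> t) is a strict subsolution of the linear delay system that
  bounds (Ih, p) from below; the barrier argument runs on (Ih, p) exp(-\<epsilon> t).\<close>

lemma exponential_subsolution_persists:
  assumes "0 \<le> T" "0 \<le> cv" "0 \<le> sh" "0 \<le> Chv * (1 - q)"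
    and bounds: "\<And>t. T \<le> t \<Longrightarrow> sh \<le> Sh t \<and> p t \<le> q \<and> \<beta>v / N t \<le> M"
    and Ih_rate: "(\<mu>h + \<epsilon>) * cu * exp (\<epsilon> * \<tau>) < Cvh * sh * cv"
    and p_rate: "(M + \<epsilon>) * cv < Chv * (1 - q) * cu"
    and window: "\<And>s. T \<le> s \<Longrightarrow> s \<le> T + \<tau> \<Longrightarrow> cu * exp (\<epsilon> * s) < Ih s \<and> cv * exp (\<epsilon> * s) < p s"
    and "T \<le> t"
  shows "cu * exp (\<epsilon> * t) < Ih t \<and> cv * exp (\<epsilon> * t) < p t"
proof -
  define u where "u s = Ih s * exp (- \<epsilon> * s)" for s
  define v where "v s = p s * exp (- \<epsilon> * s)" for s
  have Ih_u: "Ih s = u s * exp (\<epsilon> * s)" and p_v: "p s = v s * exp (\<epsilon> * s)" for s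
    using mult_exp_minus_cancel[of _ "\<epsilon> * s"] by (simp_all add: u_def v_def)
  have "cu < u t \<and> cv < v t" if "T + \<tau> \<le> t"
  proof (rule delay_barrier[OF \<tau>_nonneg, where T = "T + \<tau>" and u = u and v = v, OF _ _ _ _ _ _ _ that])
    show "cu < u s \<and> cv < v s" if "T + \<tau> - \<tau> \<le> s" "s \<le> T + \<tau>" for s
      using window[of s] that by (simp add: Ih_u p_v)
    show "continuous_on {T + \<tau>..} u" "continuous_on {T + \<tau>..} v"
      unfolding u_def v_def using \<open>0 \<le> T\<close> \<tau>_nonneg
      by (auto intro!: continuous_intros state_continuous_from p_continuous_from)
    show "(u has_real_derivative (Cvh * p (s - \<tau>) * Sh (s - \<tau>) - \<mu>h * Ih s - \<epsilon> * Ih s) * exp (- \<epsilon> * s)) (at s)"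
      if "T + \<tau> < s" for s
      unfolding u_def using that \<open>0 \<le> T\<close> \<tau>_nonneg
      by (auto intro!: derivative_eq_intros state_deriv simp: algebra_simps)
    show "(v has_real_derivative (Chv * Ih s * (1 - p s) - p s * \<beta>v / N s - \<epsilon> * p s) * exp (- \<epsilon> * s)) (at s)"
      if "T + \<tau> < s" for s
      unfolding v_def using that \<open>0 \<le> T\<close> \<tau>_nonneg
      by (auto intro!: derivative_eq_intros p_deriv simp: algebra_simps)
  next
    fix s assume "T + \<tau> < s" "cv \<le> v (s - \<tau>)" "u s = cu"
    then have "\<epsilon> * Ih s < Cvh * p (s - \<tau>) * Sh (s - \<tau>) - \<mu>h * Ih s"
      using \<open>0 \<le> cv\<close> \<open>0 \<le> sh\<close> \<open>0 \<le> T\<close> \<tau>_nonneg bounds[of "s - \<tau>"] Ih_rate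
      by (intro Ih_deriv_exceeds_rate) (auto simp: Ih_u p_v intro: mult_right_mono)
    then show "0 < (Cvh * p (s - \<tau>) * Sh (s - \<tau>) - \<mu>h * Ih s - \<epsilon> * Ih s) * exp (- \<epsilon> * s)"
      by simp
  next
    fix s assume "T + \<tau> < s" "cu \<le> u s" "v s = cv"
    then have "\<epsilon> * p s < Chv * Ih s * (1 - p s) - p s * \<beta>v / N s"
      using \<open>0 \<le> Chv * (1 - q)\<close> \<open>0 \<le> T\<close> \<tau>_nonneg bounds[of s] p_rate
      by (intro p_deriv_exceeds_rate) (auto simp: Ih_u p_v intro: mult_right_mono)
    then show "0 < (Chv * Ih s * (1 - p s) - p s * \<beta>v / N s - \<epsilon> * p s) * exp (- \<epsilon> * s)"
      by simp
  qed
  then show ?thesis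
    using window[of t] \<open>T \<le> t\<close> by (cases "t \<le> T + \<tau>") (auto simp: Ih_u p_v)
qed

lemma window_exponential_lower_bound:
  assumes "0 \<le> T" "\<And>s. T \<le> s \<Longrightarrow> s \<le> T + \<tau> \<Longrightarrow> 0 < p s"
  obtains m where "0 < m" "\<And>s. T \<le> s \<Longrightarrow> s \<le> T + \<tau> \<Longrightarrow> m * exp (\<epsilon> * s) < Ih s \<and> m * exp (\<epsilon> * s) < p s"
proof -
  have cont: "continuous_on {T..T + \<tau>} (\<lambda>s. min (Ih s) (p s) * exp (- \<epsilon> * s))"
    using state_continuous_from(2)[of T] p_continuous_from[of T] \<open>0 \<le> T\<close> \<tau>_nonneg
    by (auto intro!: continuous_intros intro: continuous_on_subset)
  have pos: "0 < min (Ih s) (p s) * exp (- \<epsilon> * s)" if "s \<in> {T..T + \<tau>}" for s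
    using Ih_pos[of s] assms that by auto
  obtain m where "0 < m" and m: "\<And>s. s \<in> {T..T + \<tau>} \<Longrightarrow> m < min (Ih s) (p s) * exp (- \<epsilon> * s)"
    using compact_continuous_pos_lower_bound[OF compact_Icc cont pos] by blast
  have "m * exp (\<epsilon> * s) < Ih s \<and> m * exp (\<epsilon> * s) < p s" if "T \<le> s" "s \<le> T + \<tau>" for s
  proof -
    have "m * exp (\<epsilon> * s) < min (Ih s) (p s) * exp (- \<epsilon> * s) * exp (\<epsilon> * s)"
      using m[of s] that by (intro mult_strict_right_mono) auto
    then show ?thesis
      using mult_exp_minus_cancel[of _ "\<epsilon> * s"] by simp
  qed
  with \<open>0 < m\<close> show thesis
    using that by blast
qed

lemma Ih_exponential_lower_bound:
  assumes "0 \<le> T" "0 < \<epsilon>" "0 < sh"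
    and bounds: "\<And>t. T \<le> t \<Longrightarrow> sh \<le> Sh t \<and> p t \<le> q \<and> \<beta>v / N t \<le> M \<and> 0 < p t"
    and gap: "(\<mu>h + \<epsilon>) * (M + \<epsilon>) * exp (\<epsilon> * \<tau>) < Cvh * sh * (Chv * (1 - q))"
  obtains c where "0 < c" "\<And>t. T \<le> t \<Longrightarrow> c * exp (\<epsilon> * t) < Ih t"
proof -
  have "0 < \<beta>v / N T"
    using N_pos[of T] \<beta>v_pos \<open>0 \<le> T\<close> \<tau>_nonneg by simp
  then have "0 < M + \<epsilon>"
    using bounds[OF order_refl] \<open>0 < \<epsilon>\<close> by linarith
  have "0 < (\<mu>h + \<epsilon>) * exp (\<epsilon> * \<tau>)" "0 < Cvh * sh"
    using \<mu>h_pos \<open>0 < \<epsilon>\<close> Cvh_pos \<open>0 < sh\<close> by simp_all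
  moreover have "(\<mu>h + \<epsilon>) * exp (\<epsilon> * \<tau>) * (M + \<epsilon>) < Cvh * sh * (Chv * (1 - q))"
    using gap by (simp add: mult_ac)
  ultimately obtain r where "0 < r" and r_low: "(\<mu>h + \<epsilon>) * exp (\<epsilon> * \<tau>) < Cvh * sh * r"
    and r_high: "(M + \<epsilon>) * r < Chv * (1 - q)"
    using obtain_ratio_between[OF _ _ \<open>0 < M + \<epsilon>\<close>] by blast
  have "0 < (M + \<epsilon>) * r"
    using \<open>0 < M + \<epsilon>\<close> \<open>0 < r\<close> by simp
  then have "0 \<le> Chv * (1 - q)"
    using r_high by linarith
  have "0 < p s" if "T \<le> s" "s \<le> T + \<tau>" for s
    using bounds[OF that(1)] by simp
  then obtain m where "0 < m"
    and window: "\<And>s. T \<le> s \<Longrightarrow> s \<le> T + \<tau> \<Longrightarrow> m * exp (\<epsilon> * s) < Ih s \<and> m * exp (\<epsilon> * s) < p s"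
    using window_exponential_lower_bound[OF \<open>0 \<le> T\<close>] by blast
  define c where "c = min m (m / r)"
  have "0 < c" "c \<le> m" "r * c \<le> m"
    using \<open>0 < m\<close> \<open>0 < r\<close> by (auto simp: c_def min_def field_simps)
  have "c * exp (\<epsilon> * t) < Ih t \<and> r * c * exp (\<epsilon> * t) < p t" if "T \<le> t" for t
  proof (rule exponential_subsolution_persists[OF \<open>0 \<le> T\<close> _ less_imp_le[OF \<open>0 < sh\<close>] \<open>0 \<le> Chv * (1 - q)\<close> _ _ _ _ that])
    show "0 \<le> r * c"
      using \<open>0 < r\<close> \<open>0 < c\<close> by simp
    show "sh \<le> Sh t \<and> p t \<le> q \<and> \<beta>v / N t \<le> M" if "T \<le> t" for t
      using bounds[OF that] by simp
    show "(\<mu>h + \<epsilon>) * c * exp (\<epsilon> * \<tau>) < Cvh * sh * (r * c)"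
      using mult_strict_right_mono[OF r_low \<open>0 < c\<close>] by (simp add: mult_ac)
    show "(M + \<epsilon>) * (r * c) < Chv * (1 - q) * c"
      using mult_strict_right_mono[OF r_high \<open>0 < c\<close>] by (simp add: mult_ac)
    show "c * exp (\<epsilon> * s) < Ih s \<and> r * c * exp (\<epsilon> * s) < p s" if "T \<le> s" "s \<le> T + \<tau>" for s
      using window[OF that] \<open>c \<le> m\<close> \<open>r * c \<le> m\<close> mult_right_mono[OF _ exp_ge_zero, of c m "\<epsilon> * s"]
        mult_right_mono[OF _ exp_ge_zero, of "r * c" m "\<epsilon> * s"] by linarith
  qed
  with \<open>0 < c\<close> show thesis
    using that by blast
qed

lemma comparison_bounds_eventually:
  assumes "0 < a" "0 < e" "e < Nv_eq" and below: "eventually (\<lambda>t. Ih t < a) at_top"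
  shows "eventually (\<lambda>t. Sh_bound a e \<le> Sh t \<and> p t \<le> p_bound a e
      \<and> \<beta>v / N t \<le> \<beta>v / (Nv_eq - e) \<and> 0 < p t) at_top"
proof -
  have p_le: "eventually (\<lambda>t. p t \<le> p_bound a e) at_top"
    using p_eventually_le[OF \<open>0 < a\<close> \<open>0 < e\<close> below] .
  then have "eventually (\<lambda>t. Sh_bound a e \<le> Sh t) at_top"
    unfolding Sh_bound_def using p_bound_nonneg \<open>0 < a\<close> \<open>0 < e\<close> by (intro Sh_eventually_ge) auto
  with p_le N_eventually_near[OF \<open>0 < e\<close>] p_eventually_pos show ?thesis
  proof eventually_elim
    case (elim t)
    moreover have "\<beta>v / N t \<le> \<beta>v / (Nv_eq - e)"
      using elim \<beta>v_pos \<open>e < Nv_eq\<close> by (intro divide_left_mono) (auto intro: mult_pos_pos)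
    ultimately show ?case by simp
  qed
qed

lemma Limsup_Ih_ge:
  assumes "0 < a" and "\<mu>h * (Chv * (Cvh + \<mu>h) * a + \<mu>h * \<mu>v) < Cvh * Chv * \<beta>h"
  shows "ereal a \<le> Limsup at_top (\<lambda>t. ereal (Ih t))"
proof (rule ccontr)
  assume "\<not> ?thesis"
  then have "eventually (\<lambda>t. ereal (Ih t) < ereal a) at_top"
    by (intro Limsup_lessD) simp
  then have below: "eventually (\<lambda>t. Ih t < a) at_top"
    by simp
  obtain e where "0 < e" "e < Nv_eq" "0 < Sh_bound a e" "0 < growth_margin a e"
    using slack_exists[OF assms] by blast
  then have gap: "(\<mu>h + e) * (\<beta>v / (Nv_eq - e) + e) * exp (e * \<tau>)
      < Cvh * Sh_bound a e * (Chv * (1 - p_bound a e))"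
    by (simp add: growth_margin_def)
  obtain T where "0 \<le> T" and bounds: "\<And>t. T \<le> t \<Longrightarrow> Sh_bound a e \<le> Sh t \<and> p t \<le> p_bound a e
      \<and> \<beta>v / N t \<le> \<beta>v / (Nv_eq - e) \<and> 0 < p t"
    using eventually_conj[OF eventually_ge_at_top[of 0]
        comparison_bounds_eventually[OF \<open>0 < a\<close> \<open>0 < e\<close> \<open>e < Nv_eq\<close> below]]
    by (auto simp: eventually_at_top_linorder)
  obtain c where "0 < c" and grows: "\<And>t. T \<le> t \<Longrightarrow> c * exp (e * t) < Ih t"
    using Ih_exponential_lower_bound[OF \<open>0 \<le> T\<close> \<open>0 < e\<close> \<open>0 < Sh_bound a e\<close> bounds gap] by blast
  have "eventually (\<lambda>t. a < c * exp (e * t)) at_top"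
    using \<open>0 < c\<close> \<open>0 < e\<close> by real_asymp
  then have "eventually (\<lambda>t. T \<le> t \<and> a < c * exp (e * t) \<and> Ih t < a) at_top"
    using eventually_ge_at_top[of T] below by eventually_elim auto
  then obtain t where "T \<le> t" "a < c * exp (e * t)" "Ih t < a"
    by (auto simp: eventually_at_top_linorder)
  then show False
    using grows[of t] by simp
qed

end

theorem theorem4:
  fixes \<beta>h \<beta>v \<mu>h \<mu>v Cvh Chv \<tau> \<theta> :: real
    and \<phi> x :: "real \<Rightarrow> real^4"
    and Shs Ihs Svs Ivs :: real
  assumes "\<beta>h > 0" "\<beta>v > 0" "\<mu>h > 0" "\<mu>v > 0" "Cvh > 0" "Chv > 0" "\<tau> \<ge> 0"
    and "R0 \<beta>h \<mu>h \<mu>v Cvh Chv > 1"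
    and "is_pos_equilibrium \<beta>h \<beta>v \<mu>h \<mu>v Cvh Chv Shs Ihs Svs Ivs"
    and "0 < \<theta>" "\<theta> < 1"
    and "\<phi> \<in> D_set \<tau>"
    and "is_solution \<beta>h \<beta>v \<mu>h \<mu>v Cvh Chv \<tau> \<phi> x"
  shows "Limsup at_top (\<lambda>t. ereal (x t $ 2)) > ereal (\<theta> * Ihs)"
proof -
  interpret vector_host_solution \<beta>h \<beta>v \<mu>h \<mu>v Cvh Chv \<tau> \<phi> x
    using assms by unfold_locales auto
  have "0 < Ihs"
    using assms(9) by (simp add: is_pos_equilibrium_def)
  define a where "a = (1 + \<theta>) / 2 * Ihs"
  have "\<theta> * Ihs < a" "a < Ihs"
    using \<open>0 < \<theta>\<close> \<open>\<theta> < 1\<close> \<open>0 < Ihs\<close> by (simp_all add: a_def field_simps)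
  have "0 < a"
    unfolding a_def using \<open>0 < \<theta>\<close> \<open>0 < Ihs\<close> by (intro mult_pos_pos) auto
  have "\<mu>h * (Chv * (Cvh + \<mu>h) * a + \<mu>h * \<mu>v) < \<mu>h * (Chv * (Cvh + \<mu>h) * Ihs + \<mu>h * \<mu>v)"
    using \<open>a < Ihs\<close> \<mu>h_pos Chv_pos Cvh_pos by simp
  also have "\<dots> = Cvh * Chv * \<beta>h"
    using pos_equilibrium_identity[OF assms(9)] .
  finally have "ereal a \<le> Limsup at_top (\<lambda>t. ereal (Ih t))"
    by (rule Limsup_Ih_ge[OF \<open>0 < a\<close>])
  moreover have "ereal (\<theta> * Ihs) < ereal a"
    using \<open>\<theta> * Ihs < a\<close> by simp
  moreover have "Limsup at_top (\<lambda>t. ereal (Ih t)) = Limsup at_top (\<lambda>t. ereal (x t $ 2))"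
    by (simp add: Ih_def)
  ultimately show ?thesis
    by (metis less_le_trans)
qed

end
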